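(* Let $n\ge 2$, $s\in D^n$, and let $f\in\mathrm{Ann}(s^{(n-1)})$ be nonzero with $\Delta(f,s)\neq 0$. Then: (i) every nonzero $g\in\mathrm{Ann}(s)$ satisfies $\deg g\ge n-\deg f$; (ii) if moreover $f\in\mathrm{Min}(s^{(n-1)})$, then every nonzero $g\in\mathrm{Ann}(s)$ satisfies $\deg g\ge \max\{e_{n-1}(f),0\}+\deg f=\max\{n-\deg f,\deg f\}$, where $e_{n-1}(f)=n-2\deg f$. In particular $L(s)\ge\max\{n-\deg f,\deg f\}$.
   Context: Let $D$ be a commutative integral domain with $1\neq 0$. For $s=(s_1,\dots,s_n)\in D^n$ put $\underline{s}=s_1x^{-1}+\cdots+s_nx^{-n}$, an element of the Laurent polynomial ring $D[x,x^{-1}]$; for a Laurent polynomial $F$, $F_k$ denotes the coefficient of $x^k$. For $1\le i\le n$, $s^{(i)}=(s_1,\dots,s_i)$. A polynomial $f\in D[x]$ is an annihilator of $s$, written $f\in\mathrm{Ann}(s)$, if $f=0$, or $d=\deg f\ge 0$ and $(f\cdot\underline{s})_{d-j}=0$ for all $j$ with $d+1\le j\le n$ (equivalently $\sum_{k=0}^{d}f_ks_{j-d+k}=0$ for $d+1\le j\le n$). $\mathrm{Min}(s)$ is the set of nonzero annihilators of $s$ of least degree, and the linear complexity $L(s)$ is that least degree. For nonzero $f\in D[x]$, the discrepancy is $\Delta(f,s)=(f\cdot\underline{s})_{\deg f-n}=\sum_{k=0}^{\deg f}f_ks_{n-\deg f+k}$. *)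

theory Defs
  imports "HOL-Computational_Algebra.Polynomial"
begin

text \<open>A sequence s = (s_1,...,s_n) over an integral domain is a list of length n;
  s_j is the j-th entry (1-based). Entries outside 1..n are 0 (coefficients of the
  Laurent polynomial underline-s).\<close>

definition sterm :: "'a::idom list \<Rightarrow> int \<Rightarrow> 'a" where
  "sterm s j = (if 1 \<le> j \<and> j \<le> int (length s) then s ! (nat j - 1) else 0)"

text \<open>Prefix s^(i) = take i s.\<close>

definition Ann :: "'a::idom list \<Rightarrow> 'a poly set" where
  "Ann s = {f. f = 0 \<or>
     (\<forall>j::int. int (degree f) + 1 \<le> j \<and> j \<le> int (length s) \<longrightarrow>
        (\<Sum>k=0..degree f. coeff f k * sterm s (j - int (degree f) + int k)) = 0)}"

definition LC :: "'a::idom list \<Rightarrow> nat" where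
  "LC s = (LEAST d. \<exists>g. g \<noteq> 0 \<and> g \<in> Ann s \<and> degree g = d)"

definition Min_ann :: "'a::idom list \<Rightarrow> 'a poly set" where
  "Min_ann s = {f. f \<noteq> 0 \<and> f \<in> Ann s \<and> degree f = LC s}"

definition discrepancy :: "'a::idom poly \<Rightarrow> 'a list \<Rightarrow> 'a" where
  "discrepancy f s = (\<Sum>k=0..degree f. coeff f k * sterm s (int (length s) - int (degree f) + int k))"

end

theory Submission
  imports Defs
begin

(* Write (g*s)_j for the coefficient sum  sum_k g_k s_(j - deg g + k);
   g annihilates s iff (g*s)_j = 0 for deg g < j <= n, and the discrepancy of f is
   (f*s)_n.  Since polynomial multiplication is commutative, for any f, g and m
       sum_l g_l (f*s)_(m - deg g + l)  =  sum_k f_k (g*s)_(m - deg f + k).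
   Part (i): suppose g annihilates s with deg g < n - deg f and take m = n.  Every
   term on the right vanishes since g annihilates s; on the left every term with
   l < deg g vanishes since f annihilates s^(n-1), leaving lead(g) * Delta(f,s) = 0,
   impossible in a domain.  Part (ii): an annihilator of s also annihilates every
   prefix of s, so minimality of f gives deg g >= deg f; combined with (i) this is
   the bound max(n - deg f, deg f), and a minimal annihilator of s (which exists:
   x^n annihilates everything) shows L(s) obeys it too. *)

definition ann_coeff :: "'a::idom poly \<Rightarrow> 'a list \<Rightarrow> int \<Rightarrow> 'a" where
  "ann_coeff g s j = (\<Sum>k=0..degree g. coeff g k * sterm s (j - int (degree g) + int k))"

lemma Ann_iff:
  "g \<in> Ann s \<longleftrightarrow>
     g = 0 \<or> (\<forall>j. int (degree g) + 1 \<le> j \<and> j \<le> int (length s) \<longrightarrow> ann_coeff g s j = 0)"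
  by (simp add: Ann_def ann_coeff_def)

lemma discrepancy_eq: "discrepancy f s = ann_coeff f s (int (length s))"
  by (simp add: discrepancy_def ann_coeff_def algebra_simps)

lemma ann_coeff_take:
  assumes "j \<le> int m"
  shows "ann_coeff g (take m s) j = ann_coeff g s j"
  unfolding ann_coeff_def using assms
  by (intro sum.cong refl) (auto simp: sterm_def min_def)

lemma Ann_take:
  assumes "g \<in> Ann s"
  shows "g \<in> Ann (take m s)"
  using assms ann_coeff_take[of _ m g s] by (auto simp: Ann_iff)

(* Commutativity of f * g * s, read off at one coefficient. *)
lemma ann_coeff_commute:
  fixes f g :: "'a::idom poly"
  shows "(\<Sum>l=0..degree g. coeff g l * ann_coeff f s (m - int (degree g) + int l))
       = (\<Sum>k=0..degree f. coeff f k * ann_coeff g s (m - int (degree f) + int k))"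
  unfolding ann_coeff_def sum_distrib_left
  by (subst sum.swap) (simp add: algebra_simps)

lemma LC_le_degree:
  assumes "g \<noteq> 0" "g \<in> Ann s"
  shows "LC s \<le> degree g"
  unfolding LC_def using assms by (intro Least_le) auto

(* ... and is attained, since x^n annihilates every sequence of length n. *)
lemma LC_attained: "\<exists>g. g \<noteq> 0 \<and> g \<in> Ann s \<and> degree g = LC s"
proof -
  have "\<exists>d g. g \<noteq> 0 \<and> g \<in> Ann s \<and> degree g = d"
    by (intro exI[of _ "length s"] exI[of _ "monom 1 (length s)"])
       (auto simp: Ann_def degree_monom_eq)
  then show ?thesis
    unfolding LC_def by (rule LeastI_ex)
qed

lemma degree_bound_discrepancy:
  fixes s :: "'a::idom list" and f g :: "'a poly"
  assumes fA: "f \<in> Ann (take (length s - 1) s)" and f0: "f \<noteq> 0"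
    and disc: "discrepancy f s \<noteq> 0"
    and g0: "g \<noteq> 0" and gA: "g \<in> Ann s"
  shows "int (degree g) \<ge> int (length s) - int (degree f)"
proof (rule ccontr)
  define n d e where "n = int (length s)" and "d = int (degree f)" and "e = int (degree g)"
  assume "\<not> ?thesis"
  then have small: "e < n - d" by (simp add: n_def d_def e_def)
  have right: "(\<Sum>k=0..degree f. coeff f k * ann_coeff g s (n - d + int k)) = 0"
    using gA g0 small by (intro sum.neutral) (auto simp: Ann_iff n_def d_def e_def)
  have f_vanishes: "ann_coeff f s (n - e + int l) = 0" if "l < degree g" for l
  proof -
    have "ann_coeff f s (n - e + int l) = ann_coeff f (take (length s - 1) s) (n - e + int l)"
      using that small by (subst ann_coeff_take) (auto simp: n_def e_def d_def)
    also have "\<dots> = 0"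
      using fA f0 that small by (auto simp: Ann_iff n_def d_def e_def)
    finally show ?thesis .
  qed
  have "(\<Sum>l=0..degree g. coeff g l * ann_coeff f s (n - e + int l))
      = coeff g (degree g) * discrepancy f s"
  proof -
    have "{0..degree g} = insert (degree g) {0..<degree g}" by auto
    then show ?thesis
      using f_vanishes by (simp add: discrepancy_eq n_def e_def)
  qed
  then have "coeff g (degree g) * discrepancy f s = 0"
    using ann_coeff_commute[of g f s n] right by (simp add: d_def e_def)
  then show False using g0 disc by simp
qed

theorem mainTheorem2:
  fixes s :: "'a::idom list" and f :: "'a poly"
  assumes "length s \<ge> 2"
    and "f \<in> Ann (take (length s - 1) s)" and "f \<noteq> 0"
    and "discrepancy f s \<noteq> 0"
  shows "(\<forall>g. g \<noteq> 0 \<and> g \<in> Ann s \<longrightarrow>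
            int (degree g) \<ge> int (length s) - int (degree f))
       \<and> (f \<in> Min_ann (take (length s - 1) s) \<longrightarrow>
            (\<forall>g. g \<noteq> 0 \<and> g \<in> Ann s \<longrightarrow>
               int (degree g) \<ge> max (int (length s) - 2 * int (degree f)) 0 + int (degree f))
          \<and> max (int (length s) - 2 * int (degree f)) 0 + int (degree f)
              = max (int (length s) - int (degree f)) (int (degree f))
          \<and> int (LC s) \<ge> max (int (length s) - int (degree f)) (int (degree f)))"
proof -
  have part1: "int (degree g) \<ge> int (length s) - int (degree f)"
    if "g \<noteq> 0" "g \<in> Ann s" for g
    using degree_bound_discrepancy assms(2-4) that by blast
  have part2: "int (degree g) \<ge> max (int (length s) - int (degree f)) (int (degree f))"
    if M: "f \<in> Min_ann (take (length s - 1) s)" and g: "g \<noteq> 0" "g \<in> Ann s" for g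
  proof -
    have "degree f \<le> degree g"
      using LC_le_degree[OF g(1) Ann_take[OF g(2)]] M by (simp add: Min_ann_def)
    then show ?thesis using part1[OF g] by simp
  qed
  obtain h where h: "h \<noteq> 0" "h \<in> Ann s" "degree h = LC s"
    using LC_attained by blast
  show ?thesis
    using part1 part2 part2[OF _ h(1,2)] h(3) by fastforce
qed

end
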